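(* Fix a channel $c$, observations $\mathcal{X}$, and a finite query set $\mathcal{Q}_c=(q_1,\dots,q_{n})$ with $q_i=(t_i,c)$ and targets $\mathbf{y}_c=(y_1,\dots,y_n)$. For a mixture component $k$, define the leaf density $$p_{c,k}(\mathbf{y}_c\mid\mathcal{Q}_c,\mathcal{X})=\Big(\prod_{i=1}^n f(y_i;\theta_i^k)\Big)\, |R|^{-1/2}\exp\!\Big(-\tfrac12\mathbf{z}^\top(R^{-1}-I)\mathbf{z}\Big),\qquad z_i=\Phi^{-1}\big(F(y_i;\theta_i^k)\big),$$ where $R=R^{c,k}\in\mathbb{R}^{n\times n}$ has entries $R_{ij}=\mathbf{v}_i^\top\mathbf{v}_j/H$ for $i\neq j$ and $R_{ii}=1$, with $\mathbf{v}_i=\tanh(g(\mathbf{e}_i^k))\in\mathbb{R}^H$. Here $\mathbf{e}_i=\mathrm{Proj}([\phi(t_i)\,\|\,\tilde{\mathbf{h}}_c])$, $\mathbf{e}_i^k$ is the $k$-th block of $\mathbf{e}_i$, $\tilde{\mathbf{h}}_c$ is a vector computed from $\mathcal{X}$ alone, and the flow parameters $\theta_i^k$ are a function of $\mathbf{e}_i^k$. Then this leaf distribution is marginalization consistent: for every index $m\in\{1,\dots,n\}$, $$\int p_{c,k}(\mathbf{y}_c\mid\mathcal{Q}_c,\mathcal{X})\,dy_m=p_{c,k}(\mathbf{y}_{c\setminus m}\mid\mathcal{Q}_{c\setminus m},\mathcal{X}),$$ where $\mathcal{Q}_{c\setminus m}$ and $\mathbf{y}_{c\setminus m}$ denote $\mathcal{Q}_c$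 and $\mathbf{y}_c$ with the $m$-th entry removed; consequently (by induction) consistency holds for removing any subset of the variables of the channel.
   Context: $\Phi$ is the standard normal CDF. $F(\cdot;\theta)$ is a Deep Sigmoidal Flow: $F=f_L\circ\cdots\circ f_1$ with $f_l(x)=\sigma(A_lx+b_l)$, $\sigma$ the sigmoid, all entries of the $A_l$ strictly positive, so $F(\cdot;\theta)$ is a strictly increasing differentiable CDF with values in $(0,1)$; $f(y;\theta)=\partial F(y;\theta)/\partial y$ is its density. $\phi$ is a fixed (sinusoidal) time embedding, $\mathrm{Proj}$ a fixed linear map, $g$ a fixed MLP, $H$ a positive integer, $\mathbf{e}_i\in\mathbb{R}^D$ with $D=KD'$ split into $K$ blocks $\mathbf{e}_i^k\in\mathbb{R}^{D'}$. The second factor is the Gaussian copula density with correlation matrix $R$. *)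

theory Defs
  imports "HOL-Probability.Probability" "Jordan_Normal_Form.Gauss_Jordan_Elimination"
    "Jordan_Normal_Form.Determinant"
begin

definition Phi :: "real \<Rightarrow> real" where
  "Phi x = (LINT t:{..x}|lborel. std_normal_density t)"

definition Phi_inv :: "real \<Rightarrow> real" where
  "Phi_inv = inv_into UNIV Phi"

definition del_nth :: "nat \<Rightarrow> 'a list \<Rightarrow> 'a list" where
  "del_nth m xs = take m xs @ drop (Suc m) xs"

definition corr_mat :: "nat \<Rightarrow> real vec list \<Rightarrow> real mat" where
  "corr_mat H vs = mat (length vs) (length vs)
     (\<lambda>(i,j). if i = j then 1 else scalar_prod (vs ! i) (vs ! j) / real H)"

definition gauss_copula_density :: "real mat \<Rightarrow> real list \<Rightarrow> real" where
  "gauss_copula_density R zs =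
     (let z = vec_of_list zs; n = length zs in
      Determinant.det R powr (-1/2) *
      exp (- (1/2) * scalar_prod z ((the (mat_inverse R) - 1\<^sub>m n) *\<^sub>v z)))"

text \<open>Leaf density given per-query flow parameters, per-query vectors v_i, and targets y_i.
  F y th is the flow CDF with parameters th, f y th its density.\<close>
definition leaf_density ::
  "(real \<Rightarrow> 'p \<Rightarrow> real) \<Rightarrow> (real \<Rightarrow> 'p \<Rightarrow> real) \<Rightarrow> nat \<Rightarrow> 'p list \<Rightarrow> real vec list
    \<Rightarrow> real list \<Rightarrow> real" where
  "leaf_density F f H ths vs ys =
     (\<Prod>i<length ys. f (ys ! i) (ths ! i)) *
     gauss_copula_density (corr_mat H vs) (map2 (\<lambda>y th. Phi_inv (F y th)) ys ths)"

definition emb_block ::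
  "(real vec \<Rightarrow> real vec) \<Rightarrow> (real \<Rightarrow> real vec) \<Rightarrow> real vec \<Rightarrow> nat \<Rightarrow> nat \<Rightarrow> real \<Rightarrow> real vec" where
  "emb_block Proj phi htilde D' k t = vec D' (\<lambda>j. Proj (phi t @\<^sub>v htilde) $ (k * D' + j))"

text \<open>The leaf density p_{c,k}(y_c | Q_c, X) for query times ts (channel c fixed) and targets ys.
  theta maps the block embedding to flow parameters, g is the fixed MLP, v_i = tanh(g(e_i^k)).\<close>
definition p_leaf ::
  "(real \<Rightarrow> 'p \<Rightarrow> real) \<Rightarrow> (real \<Rightarrow> 'p \<Rightarrow> real) \<Rightarrow> (real vec \<Rightarrow> 'p) \<Rightarrow> (real vec \<Rightarrow> real vec)
   \<Rightarrow> nat \<Rightarrow> (real vec \<Rightarrow> real vec) \<Rightarrow> (real \<Rightarrow> real vec) \<Rightarrow> real vec \<Rightarrow> nat \<Rightarrow> nat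
   \<Rightarrow> real list \<Rightarrow> real list \<Rightarrow> real" where
  "p_leaf F f theta g H Proj phi htilde D' k ts ys =
     (let es = map (emb_block Proj phi htilde D' k) ts in
      leaf_density F f H (map theta es) (map (\<lambda>e. map_vec tanh (g e)) es) ys)"

end

theory Submission
  imports Defs
begin

text \<open>
  With \<open>P = R\<inverse>\<close> the copula factor is \<open>det R powr (-1/2) * exp (- (z\<^sup>T P z - |z|\<^sup>2) / 2)\<close>.
  Completing the square in the coordinate \<open>m\<close> gives \<open>z\<^sup>T P z = a (z\<^sub>m + c)\<^sup>2 + z'\<^sup>T Q z'\<close>, where
  \<open>a = P\<^sub>m\<^sub>m > 0\<close>, \<open>c\<close> depends only on the remaining scores \<open>z'\<close>, and the Schur complement
  \<open>Q\<close> of \<open>a\<close> in \<open>P\<close> is the inverse of the submatrix \<open>R'\<close> of \<open>R\<close> without row and column \<open>m\<close>.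
  Jacobi's identity \<open>det R' = a * det R\<close> fixes the normalisation, and \<open>R'\<close> is the correlation
  matrix of the remaining queries. So the leaf density is the leaf density of the remaining
  queries times \<open>f y * sqrt a * exp (- (a (z + c)\<^sup>2 - z\<^sup>2) / 2)\<close> with \<open>z = Phi_inv (F y)\<close>, and this
  factor is the derivative of \<open>Phi (sqrt a (z + c))\<close>, which increases from 0 to 1.
\<close>

section \<open>The standard normal distribution function\<close>

definition std_normal :: "real measure" where
  "std_normal = density lborel std_normal_density"

lemma real_distribution_std_normal: "real_distribution std_normal"
  unfolding real_distribution_def std_normal_def
  using prob_space_normal_density[of 1 0] by (auto simp: real_distribution_axioms_def)

lemma Phi_eq_cdf: "Phi = cdf std_normal"
proof
  fix x
  have "emeasure std_normal {..x} = (\<integral>\<^sup>+t. ennreal (indicator {..x} t *\<^sub>R std_normal_density t) \<partial>lborel)"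
    unfolding std_normal_def
    by (subst emeasure_density) (auto intro!: nn_integral_cong simp: indicator_def)
  also have "enn2real \<dots> = (LINT t:{..x}|lborel. std_normal_density t)"
    unfolding set_lebesgue_integral_def by (rule enn2real_nn_integral_eq_integral) auto
  finally show "Phi x = cdf std_normal x"
    by (simp add: Phi_def cdf_def measure_def)
qed

lemma Phi_eq_add_interval_integral:
  assumes "a \<le> x"
  shows "Phi x = Phi a + (LBINT t=a..x. std_normal_density t)"
proof -
  have integrable: "set_integrable lborel A std_normal_density" if "A \<in> sets borel" for A
    unfolding set_integrable_def using that integrable_std_normal_moment[of 0]
    by (intro integrable_mult_indicator) auto
  have "{..x} = {..a} \<union> {a<..x}" using assms by auto
  then have "Phi x = Phi a + (LINT t:{a<..x}|lborel. std_normal_density t)"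
    unfolding Phi_def by (simp only:) (rule set_integral_Un; auto intro: integrable)
  then show ?thesis using assms by (simp add: interval_integral_Ioc)
qed

lemma Phi_has_real_derivative: "(Phi has_real_derivative std_normal_density x) (at x)"
proof -
  let ?a = "x - 1" and ?b = "x + 1"
  let ?I = "\<lambda>u. LBINT t=?a..u. std_normal_density t"
  have "continuous_on {?a..?b} std_normal_density"
    by (auto intro!: continuous_intros simp: std_normal_density_def)
  then have "(?I has_vector_derivative std_normal_density x) (at x within {?a..?b})"
    by (intro interval_integral_FTC2) auto
  then have "(?I has_vector_derivative std_normal_density x) (at x within {?a<..<?b})"
    by (rule has_vector_derivative_within_subset) auto
  then have "(?I has_vector_derivative std_normal_density x) (at x)"
    by (subst (asm) at_within_open) auto
  then have "((\<lambda>u. Phi ?a + ?I u) has_real_derivative std_normal_density x) (at x)"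
    by (auto intro!: derivative_eq_intros simp: has_real_derivative_iff_has_vector_derivative)
  then show ?thesis
    by (rule has_field_derivative_transform_within_open[of _ _ _ "{?a<..}"])
       (auto intro!: Phi_eq_add_interval_integral[symmetric])
qed

lemma isCont_Phi: "isCont Phi x"
  using Phi_has_real_derivative by (rule DERIV_isCont)

lemma strict_mono_Phi: "strict_mono Phi"
proof (rule strict_monoI)
  show "Phi x < Phi y" if "x < y" for x y
    using that by (rule DERIV_pos_imp_increasing)
      (auto intro!: exI[of _ "std_normal_density _"] Phi_has_real_derivative normal_density_pos)
qed

lemma Phi_at_top: "(Phi \<longlongrightarrow> 1) at_top"
  using real_distribution.cdf_lim_at_top_prob[OF real_distribution_std_normal]
  by (simp add: Phi_eq_cdf)

lemma Phi_at_bot: "(Phi \<longlongrightarrow> 0) at_bot"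
  using finite_borel_measure.cdf_lim_at_bot
    [OF real_distribution.finite_borel_measure_M[OF real_distribution_std_normal]]
  by (simp add: Phi_eq_cdf)

lemma range_Phi: "range Phi = {0<..<1}"
proof (intro equalityI subsetI)
  fix u assume "u \<in> range Phi"
  then obtain x where u: "u = Phi x" by auto
  have "0 \<le> Phi (x - 1)"
    using finite_borel_measure.cdf_nonneg
      [OF real_distribution.finite_borel_measure_M[OF real_distribution_std_normal]]
    by (simp add: Phi_eq_cdf)
  moreover have "Phi (x + 1) \<le> 1"
    using real_distribution.cdf_bounded_prob[OF real_distribution_std_normal] by (simp add: Phi_eq_cdf)
  moreover have "Phi (x - 1) < Phi x" "Phi x < Phi (x + 1)"
    by (auto intro: strict_monoD[OF strict_mono_Phi])
  ultimately show "u \<in> {0<..<1}" using u by simp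
next
  fix u :: real assume "u \<in> {0<..<1}"
  then have "\<forall>\<^sub>F x in at_bot. Phi x < u" "\<forall>\<^sub>F x in at_top. u < Phi x"
    by (auto intro: order_tendstoD Phi_at_bot Phi_at_top)
  then obtain a b where "Phi a < u" "u < Phi b" "a \<le> b"
    unfolding eventually_at_bot_linorder eventually_at_top_linorder
    by (metis linorder_le_cases order_refl)
  then obtain x where "Phi x = u"
    using IVT[of Phi a u b] isCont_Phi by (auto simp: less_imp_le)
  then show "u \<in> range Phi" by auto
qed

lemma Phi_inv_Phi [simp]: "Phi_inv (Phi x) = x"
  unfolding Phi_inv_def by (simp add: strict_mono_imp_inj_on[OF strict_mono_Phi])

lemma Phi_Phi_inv: "u \<in> {0<..<1} \<Longrightarrow> Phi (Phi_inv u) = u"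
  unfolding Phi_inv_def by (simp add: f_inv_into_f range_Phi)

lemma Phi_inv_less_iff: "u \<in> {0<..<1} \<Longrightarrow> Phi_inv u < x \<longleftrightarrow> u < Phi x"
  using strict_mono_less[OF strict_mono_Phi, of "Phi_inv u" x] by (simp add: Phi_Phi_inv)

lemma Phi_inv_has_real_derivative:
  assumes "u \<in> {0<..<1}"
  shows "(Phi_inv has_real_derivative inverse (std_normal_density (Phi_inv u))) (at u)"
proof (rule DERIV_inverse_function[where a = 0 and b = 1])
  have "isCont Phi_inv (Phi (Phi_inv u))"
    by (rule isCont_inverse_function2[of "Phi_inv u - 1" _ "Phi_inv u + 1"]) (auto intro: isCont_Phi)
  then show "isCont Phi_inv u" using assms by (simp add: Phi_Phi_inv)
qed (use assms normal_density_pos[of 1 0 "Phi_inv u"] in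
      \<open>auto intro: Phi_has_real_derivative simp: Phi_Phi_inv\<close>)

lemma Phi_inv_at_right_0: "filterlim Phi_inv at_bot (at_right 0)"
  unfolding filterlim_at_bot
proof
  fix x
  have "Phi x \<in> {0<..<1}" using range_Phi by blast
  then have "\<forall>\<^sub>F u in at_right 0. u \<in> {0<..<1} \<and> u < Phi x"
    unfolding eventually_at_right_field by (intro exI[of _ "Phi x"]) auto
  then show "\<forall>\<^sub>F u in at_right 0. Phi_inv u \<le> x"
    by eventually_elim (auto simp: Phi_inv_less_iff less_imp_le)
qed

lemma Phi_inv_at_left_1: "filterlim Phi_inv at_top (at_left 1)"
  unfolding filterlim_at_top
proof
  fix x
  have "Phi x \<in> {0<..<1}" using range_Phi by blast
  then have "\<forall>\<^sub>F u in at_left 1. u \<in> {0<..<1} \<and> Phi x < u"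
    unfolding eventually_at_left_field by (intro exI[of _ "Phi x"]) auto
  then show "\<forall>\<^sub>F u in at_left 1. x \<le> Phi_inv u"
    by eventually_elim (auto simp: Phi_inv_less_iff not_less[symmetric] less_imp_le)
qed

definition strict_cdf_with_density :: "(real \<Rightarrow> real) \<Rightarrow> (real \<Rightarrow> real) \<Rightarrow> bool" where
  "strict_cdf_with_density F f \<longleftrightarrow>
     (\<forall>y. (F has_real_derivative f y) (at y)) \<and> continuous_on UNIV f \<and> strict_mono F \<and>
     (\<forall>y. F y \<in> {0<..<1}) \<and> (F \<longlongrightarrow> 0) at_bot \<and> (F \<longlongrightarrow> 1) at_top"

text \<open>With \<open>z = Phi_inv (F y)\<close> the integrand is the derivative of \<open>Phi (sqrt a * (z + c))\<close>,
  which increases from 0 to 1.\<close>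

lemma has_bochner_integral_score_density:
  assumes "strict_cdf_with_density F f" and "0 < a"
  shows "has_bochner_integral lborel
     (\<lambda>y. f y * sqrt a * exp (- (a * (Phi_inv (F y) + c)\<^sup>2 - (Phi_inv (F y))\<^sup>2) / 2)) 1"
proof -
  have F_deriv: "\<And>y. (F has_real_derivative f y) (at y)" and f_cont: "continuous_on UNIV f"
    and F_mono: "strict_mono F" and F_range: "\<And>y. F y \<in> {0<..<1}"
    and F_bot: "(F \<longlongrightarrow> 0) at_bot" and F_top: "(F \<longlongrightarrow> 1) at_top"
    using assms(1) by (auto simp: strict_cdf_with_density_def)
  define z where "z y = Phi_inv (F y)" for y
  define h where "h y = f y * sqrt a * exp (- (a * (z y + c)\<^sup>2 - (z y)\<^sup>2) / 2)" for y
  define G where "G y = Phi (sqrt a * (z y + c))" for y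
  have z_deriv: "(z has_real_derivative f y * inverse (std_normal_density (z y))) (at y)" for y
    unfolding z_def
    using DERIV_chain2[OF Phi_inv_has_real_derivative[OF F_range] F_deriv] by (simp add: mult.commute)
  have G_deriv: "(G has_real_derivative h y) (at y)" for y
  proof -
    have "(G has_real_derivative
        std_normal_density (sqrt a * (z y + c)) * (sqrt a * (f y * inverse (std_normal_density (z y))))) (at y)"
      unfolding G_def
      by (rule DERIV_chain2[OF Phi_has_real_derivative]) (auto intro!: derivative_eq_intros z_deriv)
    also have "exp (- (a * (z y + c)\<^sup>2 - (z y)\<^sup>2) / 2)
        = exp (- (sqrt a * (z y + c))\<^sup>2 / 2) / exp (- (z y)\<^sup>2 / 2)"
      using \<open>0 < a\<close> by (simp add: exp_diff[symmetric] power_mult_distrib diff_divide_distrib)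
    then have "std_normal_density (sqrt a * (z y + c)) * (sqrt a * (f y * inverse (std_normal_density (z y))))
        = h y"
      unfolding h_def std_normal_density_def by (simp add: field_simps)
    finally show ?thesis .
  qed
  have h_cont: "isCont h y" for y
    unfolding h_def using DERIV_isCont[OF z_deriv] f_cont
    by (auto simp: continuous_on_eq_continuous_at intro!: continuous_intros)
  have h_nonneg: "0 \<le> h y" for y
  proof -
    have "0 \<le> f y"
      using mono_on_imp_deriv_nonneg[OF _ F_deriv[of y], of UNIV] strict_mono_mono[OF F_mono] by simp
    then show ?thesis using \<open>0 < a\<close> by (simp add: h_def)
  qed
  have "filterlim z at_bot at_bot" "filterlim z at_top at_top"
    unfolding z_def using F_range
    by (auto intro!: filterlim_compose[OF Phi_inv_at_right_0] filterlim_compose[OF Phi_inv_at_left_1]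
        tendsto_imp_filterlim_at_right tendsto_imp_filterlim_at_left F_bot F_top)
  then have "filterlim (\<lambda>y. z y + c) at_bot at_bot" "filterlim (\<lambda>y. z y + c) at_top at_top"
    using filterlim_tendsto_add_at_bot_iff[OF tendsto_const[of c], of z]
      filterlim_tendsto_add_at_top_iff[OF tendsto_const[of c], of z]
    by (simp_all add: add.commute)
  then have "filterlim (\<lambda>y. sqrt a * (z y + c)) at_bot at_bot"
    "filterlim (\<lambda>y. sqrt a * (z y + c)) at_top at_top"
    using \<open>0 < a\<close>
    by (auto intro!: filterlim_tendsto_pos_mult_at_bot filterlim_tendsto_pos_mult_at_top tendsto_const)
  then have G_lim: "(G \<longlongrightarrow> 0) at_bot" "(G \<longlongrightarrow> 1) at_top"
    unfolding G_def by (auto intro: filterlim_compose[OF Phi_at_bot] filterlim_compose[OF Phi_at_top])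
  have "set_integrable lborel (einterval (-\<infinity>) \<infinity>) h" "(LBINT y=-\<infinity>..\<infinity>. h y) = 1 - 0"
    by (rule interval_integral_FTC_nonneg[where F = G];
        use G_deriv h_cont h_nonneg G_lim in \<open>auto simp: ereal_tendsto_simps\<close>)+
  then show ?thesis
    by (simp add: has_bochner_integral_iff set_integrable_def interval_lebesgue_integral_def
        set_lebesgue_integral_def h_def z_def)
qed

section \<open>Positive definite matrices and principal submatrices\<close>

definition quad_form :: "nat \<Rightarrow> real mat \<Rightarrow> (nat \<Rightarrow> real) \<Rightarrow> real" where
  "quad_form n A x = (\<Sum>i<n. \<Sum>j<n. x i * A $$ (i,j) * x j)"

definition pos_def_mat :: "nat \<Rightarrow> real mat \<Rightarrow> bool" where
  "pos_def_mat n A \<longleftrightarrow> A \<in> carrier_mat n n \<and> transpose_mat A = A \<and>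
     (\<forall>x. (\<exists>i<n. x i \<noteq> 0) \<longrightarrow> 0 < quad_form n A x)"

lemma insert_index_less: "m < Suc k \<Longrightarrow> i < k \<Longrightarrow> insert_index m i < Suc k"
  by (simp add: insert_index_def)

lemma insert_index_eq_iff [simp]: "insert_index m i = insert_index m j \<longleftrightarrow> i = j"
  by (auto simp: insert_index_def)

lemma sum_lessThan_Suc_insert_index:
  fixes h :: "nat \<Rightarrow> 'a::comm_monoid_add"
  assumes "m < Suc k"
  shows "(\<Sum>i<Suc k. h i) = h m + (\<Sum>i<k. h (insert_index m i))"
proof -
  have "(\<Sum>i<Suc k. h i) = h m + sum h (insert_index m ` {0..<k})"
    using sum.remove[of "{0..<Suc k}" m h] assms insert_index_image[OF assms]
    by (simp add: lessThan_atLeast0)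
  then show ?thesis
    by (simp add: sum.reindex[OF insert_index_inj_on] lessThan_atLeast0)
qed

lemma prod_lessThan_Suc_insert_index:
  fixes h :: "nat \<Rightarrow> 'a::comm_monoid_mult"
  assumes "m < Suc k"
  shows "(\<Prod>i<Suc k. h i) = h m * (\<Prod>i<k. h (insert_index m i))"
proof -
  have "(\<Prod>i<Suc k. h i) = h m * prod h (insert_index m ` {0..<k})"
    using prod.remove[of "{0..<Suc k}" m h] assms insert_index_image[OF assms]
    by (simp add: lessThan_atLeast0)
  then show ?thesis
    by (simp add: prod.reindex[OF insert_index_inj_on] lessThan_atLeast0)
qed

lemma index_mult_mat_sum:
  assumes "A \<in> carrier_mat n l" "B \<in> carrier_mat l p" "i < n" "j < p"
  shows "(A * B) $$ (i,j) = (\<Sum>r<l. A $$ (i,r) * B $$ (r,j))"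
  using assms by (simp add: scalar_prod_def lessThan_atLeast0)

lemma transpose_mat_eq_index_sym:
  "A \<in> carrier_mat n n \<Longrightarrow> transpose_mat A = A \<Longrightarrow> i < n \<Longrightarrow> j < n \<Longrightarrow> A $$ (i,j) = A $$ (j,i)"
  by (metis carrier_matD index_transpose_mat(1))

lemma scalar_prod_mult_mat_vec_eq_quad_form:
  assumes "A \<in> carrier_mat n n" "v \<in> carrier_vec n"
  shows "scalar_prod v (A *\<^sub>v v) = quad_form n A (\<lambda>i. v $ i)"
  using assms
  by (simp add: quad_form_def scalar_prod_def lessThan_atLeast0 sum_distrib_left mult.assoc)

lemma pos_def_mat_det_nonzero:
  assumes "pos_def_mat n A"
  shows "det A \<noteq> 0"
proof
  assume "det A = 0"
  have A: "A \<in> carrier_mat n n" using assms by (simp add: pos_def_mat_def)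
  with \<open>det A = 0\<close> obtain v where v: "v \<in> carrier_vec n" "v \<noteq> 0\<^sub>v n" "A *\<^sub>v v = 0\<^sub>v n"
    using det_0_iff_vec_prod_zero_field by blast
  have "\<exists>i<n. v $ i \<noteq> 0"
    using v(1,2) by (metis carrier_vecD eq_vecI index_zero_vec)
  then have "0 < quad_form n A (\<lambda>i. v $ i)"
    using assms by (simp add: pos_def_mat_def)
  also have "quad_form n A (\<lambda>i. v $ i) = 0"
    using scalar_prod_mult_mat_vec_eq_quad_form[OF A v(1)] v(1,3) by simp
  finally show False by simp
qed

lemma pos_def_mat_inverse:
  assumes "pos_def_mat n A"
  obtains P where "mat_inverse A = Some P" "A * P = 1\<^sub>m n" "P * A = 1\<^sub>m n" "P \<in> carrier_mat n n"
proof -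
  have A: "A \<in> carrier_mat n n" using assms by (simp add: pos_def_mat_def)
  have "A \<in> Units (ring_mat TYPE(real) n ())"
    by (rule det_non_zero_imp_unit[OF A pos_def_mat_det_nonzero[OF assms]])
  then obtain P where "mat_inverse A = Some P"
    using mat_inverse(1)[OF A] by fastforce
  with mat_inverse(2)[OF A this] that show ?thesis by blast
qed

lemma pos_def_mat_delete:
  assumes pd: "pos_def_mat (Suc k) A" and m: "m < Suc k"
  shows "pos_def_mat k (mat_delete A m m)"
proof -
  let ?ins = "insert_index m"
  have A: "A \<in> carrier_mat (Suc k) (Suc k)" and sym: "transpose_mat A = A"
    and pos: "\<And>x. (\<exists>i<Suc k. x i \<noteq> 0) \<Longrightarrow> 0 < quad_form (Suc k) A x"
    using pd by (auto simp: pos_def_mat_def)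
  have del: "mat_delete A m m $$ (i,j) = A $$ (?ins i, ?ins j)" if "i < k" "j < k" for i j
    using mat_delete_index[OF A m m that] by simp
  have "transpose_mat (mat_delete A m m) = mat_delete A m m"
    using del transpose_mat_eq_index_sym[OF A sym] insert_index_less[OF m] A
    by (intro eq_matI) auto
  moreover have "0 < quad_form k (mat_delete A m m) x" if "\<exists>i<k. x i \<noteq> 0" for x
  proof -
    define y where "y j = (if j = m then 0 else x (delete_index m j))" for j
    have y_ins: "y (?ins j) = x j" for j by (simp add: y_def)
    have "\<exists>i<Suc k. y i \<noteq> 0" using that y_ins insert_index_less[OF m] by metis
    then have "0 < quad_form (Suc k) A y" by (rule pos)
    also have "quad_form (Suc k) A y = quad_form k (mat_delete A m m) x"
      unfolding quad_form_def sum_lessThan_Suc_insert_index[OF m] y_ins by (simp add: y_def del)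
    finally show ?thesis .
  qed
  ultimately show ?thesis
    using mat_delete_carrier[OF A] by (simp add: pos_def_mat_def)
qed

lemma transpose_mat_inverse_eq:
  fixes A P :: "'a::comm_ring_1 mat"
  assumes A: "A \<in> carrier_mat n n" and sym: "transpose_mat A = A"
    and AP: "A * P = 1\<^sub>m n" and P: "P \<in> carrier_mat n n"
  shows "transpose_mat P = P"
proof -
  have PT: "transpose_mat P \<in> carrier_mat n n" using P by simp
  have "transpose_mat P * A = 1\<^sub>m n"
    using transpose_mult[OF A P] sym AP by simp
  have "transpose_mat P = transpose_mat P * (A * P)" using AP PT by simp
  also have "\<dots> = (transpose_mat P * A) * P" using PT A P by (simp add: assoc_mult_mat)
  also have "\<dots> = P" using \<open>transpose_mat P * A = 1\<^sub>m n\<close> P by simp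
  finally show ?thesis .
qed

lemma pos_def_mat_inverse_diag_pos:
  assumes pd: "pos_def_mat n A" and AP: "A * P = 1\<^sub>m n" and P: "P \<in> carrier_mat n n" and m: "m < n"
  shows "0 < P $$ (m,m)"
proof -
  have A: "A \<in> carrier_mat n n" using pd by (simp add: pos_def_mat_def)
  have AP_col: "(\<Sum>j<n. A $$ (i,j) * P $$ (j,m)) = (if i = m then 1 else 0)" if "i < n" for i
    using index_mult_mat_sum[OF A P that m] AP that m by simp
  have "\<exists>i<n. P $$ (i,m) \<noteq> 0"
  proof (rule ccontr)
    assume "\<not> ?thesis"
    then show False using AP_col[OF m] by simp
  qed
  then have "0 < quad_form n A (\<lambda>i. P $$ (i,m))"
    using pd by (simp add: pos_def_mat_def)
  also have "quad_form n A (\<lambda>i. P $$ (i,m)) = (\<Sum>i<n. P $$ (i,m) * (if i = m then 1 else 0))"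
    unfolding quad_form_def
    by (intro sum.cong refl) (simp add: sum_distrib_left[symmetric] mult.assoc AP_col)
  also have "\<dots> = P $$ (m,m)" using m by (simp add: if_distrib cong: if_cong)
  finally show ?thesis .
qed

text \<open>Jacobi's identity for a diagonal cofactor, read off from \<open>adj_mat A = det A \<cdot> A\<inverse>\<close>.\<close>

lemma det_mat_delete_diag:
  assumes A: "A \<in> carrier_mat n n" and PA: "P * A = 1\<^sub>m n" and P: "P \<in> carrier_mat n n" and m: "m < n"
  shows "det (mat_delete A m m) = det A * P $$ (m,m)"
proof -
  have adj: "adj_mat A \<in> carrier_mat n n" by (rule adj_mat(1)[OF A])
  have "adj_mat A = (P * A) * adj_mat A" using PA adj by simp
  also have "\<dots> = P * (det A \<cdot>\<^sub>m 1\<^sub>m n)"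
    using P A adj adj_mat(2)[OF A] by (simp add: assoc_mult_mat[of _ n n A n _ n])
  also have "\<dots> = det A \<cdot>\<^sub>m P"
    using P mult_smult_distrib[OF P one_carrier_mat[of n]] by simp
  finally have "adj_mat A $$ (m,m) = det A * P $$ (m,m)" using P m by simp
  then show ?thesis using A m by (simp add: adj_mat_def cofactor_def)
qed

lemma mat_inverse_eq_Some_left_inverse:
  fixes A B :: "'a::field mat"
  assumes A: "A \<in> carrier_mat n n" and B: "B \<in> carrier_mat n n" and BA: "B * A = 1\<^sub>m n"
  shows "mat_inverse A = Some B"
proof -
  have AB: "A * B = 1\<^sub>m n" by (rule mat_mult_left_right_inverse[OF B A BA])
  then have "A \<in> Units (ring_mat TYPE('a) n ())"
    using A B BA unfolding Units_def ring_mat_def by auto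
  then obtain B' where "mat_inverse A = Some B'"
    using mat_inverse(1)[OF A] by fastforce
  with mat_inverse(2)[OF A this]
  have B': "mat_inverse A = Some B'" "A * B' = 1\<^sub>m n" "B' \<in> carrier_mat n n" by auto
  have "B = B * (A * B')" using B'(2) B by simp
  also have "\<dots> = B'" using A B B'(3) BA by (simp add: assoc_mult_mat[symmetric, of B n n A n B' n])
  finally show ?thesis using B'(1) by simp
qed

text \<open>If \<open>P = A\<inverse>\<close>, then \<open>schur_delete P m\<close> is the inverse of \<open>mat_delete A m m\<close>:
  it is the Schur complement of the entry \<open>P $$ (m,m)\<close> in \<open>P\<close>.\<close>

definition schur_delete :: "'a::field mat \<Rightarrow> nat \<Rightarrow> 'a mat" where
  "schur_delete P m = mat (dim_row P - 1) (dim_row P - 1) (\<lambda>(i,j).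
     P $$ (insert_index m i, insert_index m j)
     - P $$ (insert_index m i, m) * P $$ (m, insert_index m j) / P $$ (m,m))"

lemma schur_delete_mult_mat_delete:
  fixes A P :: "'a::field mat"
  assumes A: "A \<in> carrier_mat (Suc k) (Suc k)" and P: "P \<in> carrier_mat (Suc k) (Suc k)"
    and PA: "P * A = 1\<^sub>m (Suc k)" and m: "m < Suc k" and Pmm: "P $$ (m,m) \<noteq> 0"
  shows "schur_delete P m * mat_delete A m m = 1\<^sub>m k"
proof (rule eq_matI)
  let ?ins = "insert_index m" and ?a = "P $$ (m,m)"
  have S: "mat_delete A m m \<in> carrier_mat k k" using mat_delete_carrier[OF A] by simp
  have Q: "schur_delete P m \<in> carrier_mat k k" using P by (simp add: schur_delete_def)
  have PA_split: "P $$ (r,m) * A $$ (m,c) + (\<Sum>l<k. P $$ (r, ?ins l) * A $$ (?ins l, c))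
      = (if r = c then 1 else 0)" if "r < Suc k" "c < Suc k" for r c
  proof -
    have "(if r = c then 1 else 0) = (\<Sum>l<Suc k. P $$ (r,l) * A $$ (l,c))"
      using index_mult_mat_sum[OF P A that] PA that by simp
    then show ?thesis by (simp only: sum_lessThan_Suc_insert_index[OF m])
  qed
  fix i j assume "i < dim_row (1\<^sub>m k)" "j < dim_col (1\<^sub>m k)"
  then have i: "i < k" and j: "j < k" by auto
  note ins = insert_index_less[OF m i] insert_index_less[OF m j]
  have "m \<noteq> ?ins j" by (metis insert_index_exclude)
  then have row_m: "(\<Sum>l<k. P $$ (m, ?ins l) * A $$ (?ins l, ?ins j)) = - ?a * A $$ (m, ?ins j)"
    using PA_split[OF m ins(2)] by (simp add: eq_neg_iff_add_eq_0 add.commute)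
  have row_i: "(\<Sum>l<k. P $$ (?ins i, ?ins l) * A $$ (?ins l, ?ins j))
      = (if i = j then 1 else 0) - P $$ (?ins i, m) * A $$ (m, ?ins j)"
    using PA_split[OF ins] by (simp add: eq_diff_eq add.commute)
  have "(schur_delete P m * mat_delete A m m) $$ (i,j)
      = (\<Sum>l<k. (P $$ (?ins i, ?ins l) - P $$ (?ins i, m) * P $$ (m, ?ins l) / ?a) * A $$ (?ins l, ?ins j))"
    using index_mult_mat_sum[OF Q S i j] i j P
    by (simp add: schur_delete_def mat_delete_index[OF A m m])
  also have "\<dots> = (\<Sum>l<k. P $$ (?ins i, ?ins l) * A $$ (?ins l, ?ins j))
       - P $$ (?ins i, m) / ?a * (\<Sum>l<k. P $$ (m, ?ins l) * A $$ (?ins l, ?ins j))"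
    by (simp add: sum_subtractf sum_distrib_left algebra_simps)
  also have "\<dots> = 1\<^sub>m k $$ (i,j)"
    unfolding row_m row_i using Pmm i j by simp
  finally show "(schur_delete P m * mat_delete A m m) $$ (i,j) = 1\<^sub>m k $$ (i,j)" .
qed (use A P in \<open>auto simp: schur_delete_def\<close>)

lemma mat_inverse_mat_delete:
  fixes A P :: "'a::field mat"
  assumes A: "A \<in> carrier_mat (Suc k) (Suc k)" and P: "P \<in> carrier_mat (Suc k) (Suc k)"
    and PA: "P * A = 1\<^sub>m (Suc k)" and m: "m < Suc k" and Pmm: "P $$ (m,m) \<noteq> 0"
  shows "mat_inverse (mat_delete A m m) = Some (schur_delete P m)"
  using mat_delete_carrier[OF A] P schur_delete_mult_mat_delete[OF assms]
  by (intro mat_inverse_eq_Some_left_inverse) (auto simp: schur_delete_def)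

lemma quad_form_complete_square:
  assumes P: "P \<in> carrier_mat (Suc k) (Suc k)" and sym: "transpose_mat P = P"
    and m: "m < Suc k" and Pmm: "P $$ (m,m) \<noteq> 0"
  shows "quad_form (Suc k) P z
    = P $$ (m,m) * (z m + (\<Sum>j<k. P $$ (m, insert_index m j) * z (insert_index m j)) / P $$ (m,m))\<^sup>2
      + quad_form k (schur_delete P m) (\<lambda>i. z (insert_index m i))"
proof -
  let ?ins = "insert_index m" and ?a = "P $$ (m,m)"
  define b where "b = (\<Sum>j<k. P $$ (m, ?ins j) * z (?ins j))"
  define T where "T = (\<Sum>i<k. \<Sum>j<k. z (?ins i) * P $$ (?ins i, ?ins j) * z (?ins j))"
  have b_sym: "(\<Sum>i<k. z (?ins i) * P $$ (?ins i, m)) = b"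
    unfolding b_def using transpose_mat_eq_index_sym[OF P sym] m insert_index_less[OF m]
    by (intro sum.cong refl) simp
  have "quad_form (Suc k) P z = (z m * ?a * z m + (\<Sum>j<k. z m * P $$ (m, ?ins j) * z (?ins j)))
       + (\<Sum>i<k. z (?ins i) * P $$ (?ins i, m) * z m
           + (\<Sum>j<k. z (?ins i) * P $$ (?ins i, ?ins j) * z (?ins j)))"
    unfolding quad_form_def sum_lessThan_Suc_insert_index[OF m] ..
  also have "\<dots> = ?a * (z m)\<^sup>2 + z m * b + z m * (\<Sum>i<k. z (?ins i) * P $$ (?ins i, m)) + T"
    unfolding b_def T_def
    by (simp add: sum.distrib sum_distrib_left sum_distrib_right power2_eq_square algebra_simps)
  finally have full: "quad_form (Suc k) P z = ?a * (z m)\<^sup>2 + 2 * z m * b + T"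
    unfolding b_sym by simp
  have "quad_form k (schur_delete P m) (\<lambda>i. z (?ins i))
      = (\<Sum>i<k. \<Sum>j<k. z (?ins i) * (P $$ (?ins i, ?ins j) - P $$ (?ins i, m) * P $$ (m, ?ins j) / ?a)
           * z (?ins j))"
    unfolding quad_form_def schur_delete_def using P by simp
  also have "\<dots> = T - (\<Sum>i<k. z (?ins i) * P $$ (?ins i, m)) * b / ?a"
    unfolding T_def b_def
    by (simp add: sum_subtractf sum_distrib_left sum_distrib_right algebra_simps sum_divide_distrib)
  finally have schur: "quad_form k (schur_delete P m) (\<lambda>i. z (?ins i)) = T - b * b / ?a"
    unfolding b_sym .
  show ?thesis
    unfolding full schur b_def[symmetric] using Pmm by (simp add: field_simps power2_eq_square)
qed

lemma pos_def_mat_det_pos: "pos_def_mat n A \<Longrightarrow> 0 < det A"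
proof (induction n arbitrary: A)
  case 0
  then have "A = 1\<^sub>m 0" by (intro eq_matI) (auto simp: pos_def_mat_def)
  then show ?case by simp
next
  case (Suc k)
  have A: "A \<in> carrier_mat (Suc k) (Suc k)" using Suc.prems by (simp add: pos_def_mat_def)
  obtain P where P: "A * P = 1\<^sub>m (Suc k)" "P * A = 1\<^sub>m (Suc k)" "P \<in> carrier_mat (Suc k) (Suc k)"
    using pos_def_mat_inverse[OF Suc.prems] by metis
  have "0 < det (mat_delete A 0 0)"
    by (rule Suc.IH[OF pos_def_mat_delete[OF Suc.prems]]) simp
  also have "det (mat_delete A 0 0) = det A * P $$ (0,0)"
    by (rule det_mat_delete_diag[OF A P(2) P(3)]) simp
  finally show ?case
    using pos_def_mat_inverse_diag_pos[OF Suc.prems P(1) P(3), of 0] by (simp add: zero_less_mult_iff)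
qed

section \<open>Marginals of the Gaussian copula\<close>

lemma length_del_nth: "m < length xs \<Longrightarrow> length (del_nth m xs) = length xs - 1"
  by (simp add: del_nth_def)

lemma nth_del_nth: "m < length xs \<Longrightarrow> i < length xs - 1 \<Longrightarrow> del_nth m xs ! i = xs ! insert_index m i"
  by (auto simp: del_nth_def nth_append insert_index_def min_def)

lemma del_nth_map: "del_nth m (map h xs) = map h (del_nth m xs)"
  by (simp add: del_nth_def take_map drop_map)

lemma del_nth_list_update [simp]: "del_nth m (xs[m := x]) = del_nth m xs"
  by (simp add: del_nth_def)

lemma del_nth_map2:
  "length xs = length ys \<Longrightarrow> del_nth m (map2 h xs ys) = map2 h (del_nth m xs) (del_nth m ys)"
  by (simp add: del_nth_def take_map drop_map take_zip drop_zip)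

lemma map2_list_update_left: "map2 h (xs[m := x]) ys = (map2 h xs ys)[m := h x (ys ! m)]"
proof -
  have "zip (xs[m := x]) ys = (zip xs ys)[m := (x, ys ! m)]"
    by (metis list_update_id zip_update)
  then show ?thesis by (simp add: map_update)
qed

lemma quad_form_minus_one_mat:
  assumes "P \<in> carrier_mat n n"
  shows "quad_form n (P - 1\<^sub>m n) z = quad_form n P z - (\<Sum>i<n. (z i)\<^sup>2)"
proof -
  have "quad_form n (P - 1\<^sub>m n) z = (\<Sum>i<n. \<Sum>j<n. z i * P $$ (i,j) * z j - (if i = j then z i * z j else 0))"
    unfolding quad_form_def using assms by (intro sum.cong refl) (auto simp: algebra_simps)
  then show ?thesis
    by (simp add: quad_form_def sum_subtractf power2_eq_square)
qed

lemma gauss_copula_density_eq_quad_form: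
  assumes R: "R \<in> carrier_mat n n" and inv: "mat_inverse R = Some P" and len: "length zs = n"
  shows "gauss_copula_density R zs
    = det R powr (-1/2) * exp (- (quad_form n P (\<lambda>i. zs ! i) - (\<Sum>i<n. (zs ! i)\<^sup>2)) / 2)"
proof -
  have P: "P \<in> carrier_mat n n" using mat_inverse(2)[OF R inv] by simp
  have "P - 1\<^sub>m n \<in> carrier_mat n n" using P by (intro minus_carrier_mat) auto
  then have "scalar_prod (vec_of_list zs) ((P - 1\<^sub>m n) *\<^sub>v vec_of_list zs)
      = quad_form n (P - 1\<^sub>m n) (\<lambda>i. zs ! i)"
    using scalar_prod_mult_mat_vec_eq_quad_form[of "P - 1\<^sub>m n" n "vec_of_list zs"] len
    by (simp add: carrier_vecI vec_of_list_index)
  then show ?thesis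
    unfolding gauss_copula_density_def Let_def inv len quad_form_minus_one_mat[OF P]
    by (simp add: field_simps)
qed

lemma powr_neg_half_divide:
  fixes s a :: real
  assumes "0 < s" "0 < a"
  shows "(s / a) powr (-1/2) = s powr (-1/2) * sqrt a"
proof -
  have "(s / a) powr (-1/2) = s powr (-1/2) / a powr (-(1/2))"
    using assms by (simp only: powr_divide minus_divide_left)
  also have "a powr (-(1/2)) = inverse (sqrt a)"
    using assms by (simp only: powr_minus powr_half_sqrt)
  finally show ?thesis by (simp only: divide_inverse inverse_inverse_eq)
qed

lemma gauss_copula_density_split:
  assumes pd: "pos_def_mat (Suc k) R" and inv: "mat_inverse R = Some P"
    and len: "length zs = Suc k" and m: "m < Suc k"
  defines "a \<equiv> P $$ (m,m)"
    and "c \<equiv> (\<Sum>j<k. P $$ (m, insert_index m j) * del_nth m zs ! j) / P $$ (m,m)"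
  shows "gauss_copula_density R zs
    = gauss_copula_density (mat_delete R m m) (del_nth m zs)
      * (sqrt a * exp (- (a * (zs ! m + c)\<^sup>2 - (zs ! m)\<^sup>2) / 2))"
proof -
  let ?ins = "insert_index m" and ?S = "mat_delete R m m" and ?zs' = "del_nth m zs"
  have R: "R \<in> carrier_mat (Suc k) (Suc k)" and sym: "transpose_mat R = R"
    using pd by (auto simp: pos_def_mat_def)
  have RP: "R * P = 1\<^sub>m (Suc k)" "P * R = 1\<^sub>m (Suc k)" "P \<in> carrier_mat (Suc k) (Suc k)"
    using mat_inverse(2)[OF R inv] by auto
  have "0 < a" unfolding a_def by (rule pos_def_mat_inverse_diag_pos[OF pd RP(1) RP(3) m])
  have S: "?S \<in> carrier_mat k k" using mat_delete_carrier[OF R] by simp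
  have S_inv: "mat_inverse ?S = Some (schur_delete P m)"
    using mat_inverse_mat_delete[OF R RP(3,2) m] \<open>0 < a\<close> by (simp add: a_def)
  have "0 < det ?S" by (rule pos_def_mat_det_pos[OF pos_def_mat_delete[OF pd m]])
  moreover have "det ?S = det R * a"
    unfolding a_def by (rule det_mat_delete_diag[OF R RP(2,3) m])
  ultimately have det: "det R powr (-1/2) = det ?S powr (-1/2) * sqrt a"
    using \<open>0 < a\<close> powr_neg_half_divide[of "det ?S" a] by (simp add: field_simps)
  have len': "length ?zs' = k" and zs': "\<And>i. i < k \<Longrightarrow> ?zs' ! i = zs ! ?ins i"
    using len m by (simp_all add: length_del_nth nth_del_nth)
  have "quad_form (Suc k) P (\<lambda>i. zs ! i)
      = a * (zs ! m + c)\<^sup>2 + quad_form k (schur_delete P m) (\<lambda>i. ?zs' ! i)"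
    using quad_form_complete_square
        [OF RP(3) transpose_mat_inverse_eq[OF R sym RP(1,3)] m, of "\<lambda>i. zs ! i"]
      \<open>0 < a\<close> zs' unfolding a_def c_def quad_form_def by simp
  moreover have "(\<Sum>i<Suc k. (zs ! i)\<^sup>2) = (zs ! m)\<^sup>2 + (\<Sum>i<k. (?zs' ! i)\<^sup>2)"
    unfolding sum_lessThan_Suc_insert_index[OF m] using zs' by simp
  ultimately show ?thesis
    unfolding gauss_copula_density_eq_quad_form[OF R inv len]
      gauss_copula_density_eq_quad_form[OF S S_inv len'] det
    by (simp add: mult_ac exp_add[symmetric] field_simps)
qed

lemma gauss_copula_density_list_update:
  assumes pd: "pos_def_mat (length zs) R" and m: "m < length zs"
  obtains a c where "0 < a"
    "\<And>z. gauss_copula_density R (zs[m := z])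
       = gauss_copula_density (mat_delete R m m) (del_nth m zs) * (sqrt a * exp (- (a * (z + c)\<^sup>2 - z\<^sup>2) / 2))"
proof -
  obtain k where k: "length zs = Suc k" using m by (cases "length zs") auto
  obtain P where P: "mat_inverse R = Some P" "R * P = 1\<^sub>m (Suc k)" "P \<in> carrier_mat (Suc k) (Suc k)"
    using pos_def_mat_inverse[OF pd] k by metis
  note pd' = pd[unfolded k] and m' = m[unfolded k]
  show ?thesis
  proof (rule that)
    show "0 < P $$ (m,m)" by (rule pos_def_mat_inverse_diag_pos[OF pd' P(2,3) m'])
    show "gauss_copula_density R (zs[m := z])
      = gauss_copula_density (mat_delete R m m) (del_nth m zs)
        * (sqrt (P $$ (m,m)) * exp (- (P $$ (m,m)
            * (z + (\<Sum>j<k. P $$ (m, insert_index m j) * del_nth m zs ! j) / P $$ (m,m))\<^sup>2 - z\<^sup>2) / 2))"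
      for z
      using gauss_copula_density_split[OF pd' P(1) _ m', of "zs[m := z]"] k m by simp
  qed
qed

section \<open>Marginals of the leaf density\<close>

text \<open>\<open>corr_mat H vs\<close> is the Gram matrix of the \<open>v\<^sub>i / sqrt H\<close> plus the diagonal matrix with
  entries \<open>1 - |v\<^sub>i|\<^sup>2 / H\<close>, which are positive because all coordinates of \<open>v\<^sub>i\<close> lie in \<open>(-1, 1)\<close>.\<close>

lemma corr_mat_pos_def:
  fixes vs :: "real vec list"
  assumes H: "0 < H" and dims: "\<And>i. i < length vs \<Longrightarrow> dim_vec (vs ! i) = H"
    and bounded: "\<And>i l. i < length vs \<Longrightarrow> l < H \<Longrightarrow> \<bar>vs ! i $ l\<bar> < 1"
  shows "pos_def_mat (length vs) (corr_mat H vs)"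
proof -
  let ?n = "length vs" and ?R = "corr_mat H vs"
  define G where "G i j = (\<Sum>l<H. vs ! i $ l * vs ! j $ l)" for i j
  define d where "d i = 1 - G i i / H" for i
  have R_index: "?R $$ (i,j) = G i j / H + (if i = j then d i else 0)" if "i < ?n" "j < ?n" for i j
    using that dims[OF that(2)]
    by (simp add: corr_mat_def d_def G_def scalar_prod_def lessThan_atLeast0)
  have d_pos: "0 < d i" if "i < ?n" for i
  proof -
    have "G i i = (\<Sum>l<H. (vs ! i $ l)\<^sup>2)" unfolding G_def by (simp add: power2_eq_square)
    also have "\<dots> < (\<Sum>l<H. 1)"
      using H bounded[OF that] by (intro sum_strict_mono) (auto simp: abs_square_less_1)
    finally show ?thesis unfolding d_def using H by (simp add: field_simps)
  qed
  have gram: "(\<Sum>i<?n. \<Sum>j<?n. x i * G i j * x j) = (\<Sum>l<H. (\<Sum>i<?n. x i * vs ! i $ l)\<^sup>2)" for x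
  proof -
    have "(\<Sum>l<H. (\<Sum>i<?n. x i * vs ! i $ l)\<^sup>2)
        = (\<Sum>l<H. \<Sum>i<?n. \<Sum>j<?n. x i * vs ! i $ l * (x j * vs ! j $ l))"
      by (simp add: power2_eq_square sum_product)
    also have "\<dots> = (\<Sum>i<?n. \<Sum>j<?n. \<Sum>l<H. x i * vs ! i $ l * (x j * vs ! j $ l))"
      by (subst sum.swap) (simp add: sum.swap[of _ "{..<H}"])
    also have "\<dots> = (\<Sum>i<?n. \<Sum>j<?n. x i * G i j * x j)"
      unfolding G_def by (simp add: sum_distrib_left mult_ac)
    finally show ?thesis by simp
  qed
  have "quad_form ?n ?R x = (\<Sum>l<H. (\<Sum>i<?n. x i * vs ! i $ l)\<^sup>2) / H + (\<Sum>i<?n. d i * (x i)\<^sup>2)" for x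
  proof -
    have "quad_form ?n ?R x
        = (\<Sum>i<?n. \<Sum>j<?n. x i * G i j * x j / H + (if i = j then x i * d i * x j else 0))"
      unfolding quad_form_def by (intro sum.cong refl) (simp add: R_index algebra_simps)
    then show ?thesis
      unfolding gram[symmetric]
      by (simp add: sum.distrib sum_divide_distrib power2_eq_square mult_ac cong: if_cong)
  qed
  moreover have "0 < (\<Sum>i<?n. d i * (x i)\<^sup>2)" if "i0 < ?n" "x i0 \<noteq> 0" for x i0
  proof (rule sum_pos2[of _ i0])
    show "0 \<le> d i * (x i)\<^sup>2" if "i \<in> {..<?n}" for i
      using d_pos[of i] that by (simp add: less_imp_le)
  qed (use that d_pos in auto)
  moreover have "0 \<le> (\<Sum>l<H. (\<Sum>i<?n. x i * vs ! i $ l)\<^sup>2) / H" for x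
    by (simp add: sum_nonneg)
  moreover have "transpose_mat ?R = ?R"
    using dims by (intro eq_matI) (auto simp: corr_mat_def intro!: comm_scalar_prod[of _ H] carrier_vecI)
  ultimately show ?thesis
    unfolding pos_def_mat_def by (fastforce simp: corr_mat_def add_nonneg_pos)
qed

lemma corr_mat_del_nth:
  assumes "m < length vs"
  shows "corr_mat H (del_nth m vs) = mat_delete (corr_mat H vs) m m"
proof -
  obtain k where k: "length vs = Suc k" using assms by (cases "length vs") auto
  have C: "corr_mat H vs \<in> carrier_mat (Suc k) (Suc k)" using k by (simp add: corr_mat_def)
  have m: "m < Suc k" using assms k by simp
  show ?thesis
  proof (rule eq_matI)
    fix i j assume "i < dim_row (mat_delete (corr_mat H vs) m m)" "j < dim_col (mat_delete (corr_mat H vs) m m)"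
    then have ij: "i < k" "j < k" using C by auto
    have "mat_delete (corr_mat H vs) m m $$ (i,j) = corr_mat H vs $$ (insert_index m i, insert_index m j)"
      using mat_delete_index[OF C m m ij] by simp
    then show "corr_mat H (del_nth m vs) $$ (i,j) = mat_delete (corr_mat H vs) m m $$ (i,j)"
      using ij k assms insert_index_less[OF m] by (simp add: corr_mat_def length_del_nth nth_del_nth)
  qed (use C k assms in \<open>auto simp: corr_mat_def length_del_nth\<close>)
qed

lemma leaf_density_list_update:
  assumes pd: "pos_def_mat (length ys) (corr_mat H vs)"
    and len: "length ths = length ys" "length vs = length ys" and m: "m < length ys"
  obtains a c where "0 < a"
    "\<And>y. leaf_density F f H ths vs (ys[m := y])
       = leaf_density F f H (del_nth m ths) (del_nth m vs) (del_nth m ys)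
         * (f y (ths ! m) * sqrt a
            * exp (- (a * (Phi_inv (F y (ths ! m)) + c)\<^sup>2 - (Phi_inv (F y (ths ! m)))\<^sup>2) / 2))"
proof -
  define zs where "zs = map2 (\<lambda>y th. Phi_inv (F y th)) ys ths"
  have len_zs: "length zs = length ys" using len by (simp add: zs_def)
  obtain a c where "0 < a" and copula:
    "\<And>z. gauss_copula_density (corr_mat H vs) (zs[m := z])
       = gauss_copula_density (mat_delete (corr_mat H vs) m m) (del_nth m zs)
         * (sqrt a * exp (- (a * (z + c)\<^sup>2 - z\<^sup>2) / 2))"
    using gauss_copula_density_list_update[of zs "corr_mat H vs" m] pd m len_zs by metis
  obtain k where k: "length ys = Suc k" using m by (cases "length ys") auto
  have prod: "(\<Prod>i<length ys. f (ys[m := y] ! i) (ths ! i))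
      = f y (ths ! m) * (\<Prod>i<length (del_nth m ys). f (del_nth m ys ! i) (del_nth m ths ! i))" for y
  proof -
    have "m \<noteq> insert_index m i" for i by (metis insert_index_exclude)
    then show ?thesis
      unfolding k prod_lessThan_Suc_insert_index[OF m[unfolded k]]
      using m len k insert_index_less[of m k] by (simp add: length_del_nth nth_del_nth)
  qed
  have zs_update: "map2 (\<lambda>y th. Phi_inv (F y th)) (ys[m := y]) ths = zs[m := Phi_inv (F y (ths ! m))]" for y
    by (simp add: zs_def map2_list_update_left)
  have zs_del: "del_nth m zs = map2 (\<lambda>y th. Phi_inv (F y th)) (del_nth m ys) (del_nth m ths)"
    using len by (simp add: zs_def del_nth_map2)
  have R_del: "mat_delete (corr_mat H vs) m m = corr_mat H (del_nth m vs)"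
    using len m by (simp add: corr_mat_del_nth)
  show ?thesis
    by (rule that[OF \<open>0 < a\<close>])
       (simp only: leaf_density_def length_list_update prod zs_update copula zs_del R_del mult_ac)
qed

lemma leaf_density_marginal:
  assumes cdf: "\<And>th. strict_cdf_with_density (\<lambda>y. F y th) (\<lambda>y. f y th)"
    and pd: "pos_def_mat (length ys) (corr_mat H vs)"
    and len: "length ths = length ys" "length vs = length ys" and m: "m < length ys"
  shows "has_bochner_integral lborel (\<lambda>y. leaf_density F f H ths vs (ys[m := y]))
    (leaf_density F f H (del_nth m ths) (del_nth m vs) (del_nth m ys))"
proof -
  obtain a c where "0 < a" and split:
    "\<And>y. leaf_density F f H ths vs (ys[m := y])
       = leaf_density F f H (del_nth m ths) (del_nth m vs) (del_nth m ys)
         * (f y (ths ! m) * sqrt a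
            * exp (- (a * (Phi_inv (F y (ths ! m)) + c)\<^sup>2 - (Phi_inv (F y (ths ! m)))\<^sup>2) / 2))"
    using leaf_density_list_update[OF pd len m] by metis
  show ?thesis
    unfolding split
    using has_bochner_integral_mult_right[OF has_bochner_integral_score_density[OF cdf \<open>0 < a\<close>]]
    by simp
qed

theorem propositionA2:
  fixes F f :: "real \<Rightarrow> 'p \<Rightarrow> real"
    and theta :: "real vec \<Rightarrow> 'p"
    and g Proj :: "real vec \<Rightarrow> real vec"
    and phi :: "real \<Rightarrow> real vec"
    and htilde :: "real vec"
    and H K D' k m :: nat
    and ts ys :: "real list"
  assumes F_deriv: "\<And>th y. ((\<lambda>u. F u th) has_real_derivative f y th) (at y)"
    and f_cont: "\<And>th. continuous_on UNIV (\<lambda>y. f y th)"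
    and F_mono: "\<And>th. strict_mono (\<lambda>y. F y th)"
    and F_range: "\<And>th y. 0 < F y th \<and> F y th < 1"
    and F_bot: "\<And>th. ((\<lambda>y. F y th) \<longlongrightarrow> 0) at_bot"
    and F_top: "\<And>th. ((\<lambda>y. F y th) \<longlongrightarrow> 1) at_top"
    and H_pos: "0 < H"
    and g_dim: "\<And>x. dim_vec x = D' \<Longrightarrow> dim_vec (g x) = H"
    and Proj_dim: "\<And>x. dim_vec (Proj x) = K * D'"
    and k_lt: "k < K"
    and len: "length ys = length ts"
    and m_lt: "m < length ts"
  shows "has_bochner_integral lborel
           (\<lambda>y. p_leaf F f theta g H Proj phi htilde D' k ts (ys[m := y]))
           (p_leaf F f theta g H Proj phi htilde D' k (del_nth m ts) (del_nth m ys))"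
proof -
  define es where "es = map (emb_block Proj phi htilde D' k) ts"
  define vs where "vs = map (\<lambda>e. map_vec tanh (g e)) es"
  have "strict_cdf_with_density (\<lambda>y. F y th) (\<lambda>y. f y th)" for th
    using F_deriv f_cont F_mono F_range F_bot F_top by (simp add: strict_cdf_with_density_def)
  moreover have "pos_def_mat (length ys) (corr_mat H vs)"
    using corr_mat_pos_def[OF H_pos, of vs] len
    by (simp add: vs_def es_def emb_block_def g_dim abs_less_iff tanh_real_lt_1 tanh_real_gt_neg1)
  ultimately have "has_bochner_integral lborel (\<lambda>y. leaf_density F f H (map theta es) vs (ys[m := y]))
      (leaf_density F f H (del_nth m (map theta es)) (del_nth m vs) (del_nth m ys))"
    using len m_lt by (intro leaf_density_marginal) (auto simp: es_def vs_def)
  then show ?thesis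
    by (simp add: p_leaf_def es_def vs_def del_nth_map)
qed

end
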